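(* Let $\alpha\neq\beta$, let $(g_n)$ be as in the context, and let $x$ be a complex number (or indeterminate) with $x\neq\alpha$. Put $G(t)=\sum_{n\ge0}(\alpha-\beta)^{n-1}g_n(x)t^n$. Then, as formal power series in $t$, $$G(t)=\frac{1+t(x-\beta)(\alpha-\beta)-\sqrt{1-2t(x-\beta)(\alpha+\beta)+t^2(x-\beta)^2(\alpha-\beta)^2}+\dfrac{2(x-\alpha)}{\alpha-\beta}}{2\bigl(x-\alpha+xt(\alpha-\beta)^2\bigr)},$$ where the square root denotes the formal power series with constant term $1$.
   Context: Fix complex numbers $\alpha\neq\beta$. Define polynomials $g_n(x)\in\mathbb{C}[x]$ recursively by $g_0(x)=1$ and, for $n\ge1$, $$(x-\alpha)(\alpha-\beta)^{n-1}g_n(x)=\alpha(x-\beta)^n g_{n-1}(\alpha)-x(\alpha-\beta)^n g_{n-1}(x).$$ (The right-hand side vanishes at $x=\alpha$, so it is divisible by $x-\alpha$ and $g_n$ is a uniquely determined polynomial.) *)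

theory Defs
  imports "HOL-Computational_Algebra.Computational_Algebra"
begin

text \<open>The defining relation
  (x-a)(a-b)^(n-1) g_n(x) = a (x-b)^n g_(n-1)(a) - x (a-b)^n g_(n-1)(x)
  is solved for g_n by exact polynomial division by (x - a).\<close>
fun gpoly :: "complex \<Rightarrow> complex \<Rightarrow> nat \<Rightarrow> complex poly" where
  "gpoly a b 0 = 1"
| "gpoly a b (Suc n) =
     smult (1 / (a - b) ^ n)
       ((smult (a * poly (gpoly a b n) a) ([:- b, 1:] ^ Suc n)
         - smult ((a - b) ^ Suc n) ([:0, 1:] * gpoly a b n)) div [:- a, 1:])"

definition fps_sqrt1 :: "complex fps \<Rightarrow> complex fps" where
  "fps_sqrt1 P = fps_radical (\<lambda>_ _. 1) 2 P"

end

theory Submission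
  imports Defs
begin

(* Put h_n = (alpha - beta)^(n-1) g_n and c_n = g_n(alpha). The defining relation reads
   (x - alpha) h_(n+1)(x) + (alpha - beta)^2 x h_n(x) = alpha c_n (x - beta)^(n+1),
   so G satisfies a linear functional equation whose only other unknown is
   C(s) = sum c_n s^n at s = (x - beta) t. C is found by the kernel method: substituting
   for x the power series V(t) = alpha / (1 + (alpha - beta)^2 t), which annihilates the
   coefficient of G, makes the recurrence telescope and shows that Y(s) = 2 alpha s C(s)
   is a root of Y^2 - 2 Y (1 + (alpha - beta) s) + 4 alpha s. Hence
   1 + (alpha - beta)(x - beta) t - Y((x - beta) t) is the square root of the discriminant
   with constant term 1, and solving the functional equation for G gives the formula. *)

(* Composition needs an inner series with constant term 0, so p(f) is computed as the
   Taylor expansion of p at f$0 composed with f - f$0. *)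

definition fps_eval_poly :: "'a::comm_ring_1 poly \<Rightarrow> 'a fps \<Rightarrow> 'a fps" where
  "fps_eval_poly p f = fps_of_poly (p \<circ>\<^sub>p [:f $ 0, 1:]) oo (f - fps_const (f $ 0))"

context
  fixes f :: "'a::idom fps"
begin

lemma fps_eval_poly_add: "fps_eval_poly (p + q) f = fps_eval_poly p f + fps_eval_poly q f"
  by (simp add: fps_eval_poly_def pcompose_add fps_of_poly_add fps_compose_add_distrib)

lemma fps_eval_poly_mult: "fps_eval_poly (p * q) f = fps_eval_poly p f * fps_eval_poly q f"
  by (simp add: fps_eval_poly_def pcompose_mult fps_of_poly_mult fps_compose_mult_distrib)

lemma fps_eval_poly_const: "fps_eval_poly [:c:] f = fps_const c"
  by (simp add: fps_eval_poly_def fps_of_poly_const)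

lemma fps_eval_poly_smult: "fps_eval_poly (smult c p) f = fps_const c * fps_eval_poly p f"
  by (simp add: fps_eval_poly_def pcompose_smult fps_of_poly_smult fps_compose_mult_distrib)

lemma fps_eval_poly_power: "fps_eval_poly (p ^ n) f = fps_eval_poly p f ^ n"
  using fps_eval_poly_const[of 1]
  by (induction n) (simp_all add: fps_eval_poly_mult pCons_one)

lemma fps_eval_poly_linear: "fps_eval_poly [:c, 1:] f = fps_const c + f"
  by (simp add: fps_eval_poly_def pcompose_pCons fps_of_poly_pCons fps_compose_add_distrib)

end

lemma fps_compose_eq_of_telescoping:
  fixes h :: "nat \<Rightarrow> 'a::idom fps"
  assumes "\<sigma> $ 0 = 0"
    and "\<And>n. h n - h (Suc n) = F * (fps_const (c n) * \<sigma> ^ n)"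
    and "\<And>n k. k < n \<Longrightarrow> h n $ k = 0"
  shows "h 0 = F * (Abs_fps c oo \<sigma>)"
proof (rule fps_ext)
  fix k
  have partial_sum: "(\<Sum>n<Suc k. fps_const (c n) * \<sigma> ^ n) $ j = (Abs_fps c oo \<sigma>) $ j"
    if "j \<le> k" for j
  proof -
    have "(\<Sum>n<Suc k. fps_const (c n) * \<sigma> ^ n) $ j = (\<Sum>n<Suc k. c n * (\<sigma> ^ n) $ j)"
      by (simp add: fps_sum_nth)
    also have "\<dots> = (\<Sum>n\<in>{0..j}. c n * (\<sigma> ^ n) $ j)"
      using that startsby_zero_power_prefix[OF assms(1)]
      by (intro sum.mono_neutral_right) auto
    finally show ?thesis
      by (simp add: fps_compose_nth)
  qed
  have "h 0 - h (Suc k) = (\<Sum>n<Suc k. h n - h (Suc n))"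
    by (rule sum_lessThan_telescope'[symmetric])
  also have "\<dots> = F * (\<Sum>n<Suc k. fps_const (c n) * \<sigma> ^ n)"
    by (simp only: assms(2) sum_distrib_left)
  finally have "h 0 $ k = (F * (\<Sum>n<Suc k. fps_const (c n) * \<sigma> ^ n)) $ k"
    by (metis assms(3) diff_zero fps_sub_nth lessI)
  also have "\<dots> = (F * (Abs_fps c oo \<sigma>)) $ k"
    unfolding fps_mult_nth by (intro sum.cong) (simp_all only: partial_sum diff_le_self)
  finally show "h 0 $ k = (F * (Abs_fps c oo \<sigma>)) $ k" .
qed

lemma fps_sqrt1_eqI:
  assumes "S\<^sup>2 = P" and "S $ 0 = 1"
  shows "fps_sqrt1 P = S"
proof -
  have "S ^ Suc 1 = P \<longleftrightarrow> S = fps_radical (\<lambda>_ _. 1) (Suc 1) P"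
    using assms by (intro radical_unique) (auto simp: fps_power_zeroth)
  then show ?thesis
    using assms(1) by (simp add: fps_sqrt1_def numeral_2_eq_2)
qed

definition hpoly :: "complex \<Rightarrow> complex \<Rightarrow> nat \<Rightarrow> complex poly" where
  "hpoly a b n = smult ((a - b) powi (int n - 1)) (gpoly a b n)"

lemma hpoly_altdef:
  assumes "a \<noteq> b"
  shows "hpoly a b n = smult ((a - b) ^ n / (a - b)) (gpoly a b n)"
  using assms by (simp add: hpoly_def power_int_diff)

lemma hpoly_0: "a \<noteq> b \<Longrightarrow> hpoly a b 0 = [:1 / (a - b):]"
  by (simp add: hpoly_altdef)

lemma hpoly_recurrence:
  assumes "a \<noteq> b"
  shows "[:- a, 1:] * hpoly a b (Suc n) + smult ((a - b) ^ 2) ([:0, 1:] * hpoly a b n)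
       = smult (a * poly (gpoly a b n) a) ([:- b, 1:] ^ Suc n)"
proof -
  define r where "r = smult (a * poly (gpoly a b n) a) ([:- b, 1:] ^ Suc n)
         - smult ((a - b) ^ Suc n) ([:0, 1:] * gpoly a b n)"
  have "poly r a = 0"
    by (simp add: r_def algebra_simps)
  then have "[:- a, 1:] dvd r"
    by (simp add: poly_eq_0_iff_dvd)
  moreover have "hpoly a b (Suc n) = r div [:- a, 1:]"
    using assms by (simp add: hpoly_altdef r_def)
  ultimately have "[:- a, 1:] * hpoly a b (Suc n) = r"
    by (simp del: mult_pCons_left)
  moreover have "smult ((a - b) ^ 2) ([:0, 1:] * hpoly a b n)
      = smult ((a - b) ^ Suc n) ([:0, 1:] * gpoly a b n)"
    using assms by (simp add: hpoly_altdef power2_eq_square)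
  ultimately show ?thesis
    by (simp add: r_def)
qed

lemma hpoly_fps_functional_equation:
  fixes a b x :: complex
  assumes "a \<noteq> b"
  defines "H \<equiv> Abs_fps (\<lambda>n. poly (hpoly a b n) x)"
  shows "fps_const (x - a) * H + fps_const (x * (a - b) ^ 2) * fps_X * H
       = fps_const ((x - a) / (a - b)) + fps_const (a * (x - b)) * fps_X
           * (Abs_fps (\<lambda>n. poly (gpoly a b n) a) oo (fps_const (x - b) * fps_X))"
proof (rule fps_ext)
  fix n
  show "(fps_const (x - a) * H + fps_const (x * (a - b) ^ 2) * fps_X * H) $ n
      = (fps_const ((x - a) / (a - b)) + fps_const (a * (x - b)) * fps_X
           * (Abs_fps (\<lambda>n. poly (gpoly a b n) a) oo (fps_const (x - b) * fps_X))) $ n"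
  proof (cases n)
    case 0
    then show ?thesis
      using assms by (simp add: hpoly_0)
  next
    case (Suc m)
    have "poly ([:- a, 1:] * hpoly a b (Suc m) + smult ((a - b) ^ 2) ([:0, 1:] * hpoly a b m)) x
        = poly (smult (a * poly (gpoly a b m) a) ([:- b, 1:] ^ Suc m)) x"
      using hpoly_recurrence[OF assms(1)] by simp
    then have "(x - a) * poly (hpoly a b (Suc m)) x + x * (a - b) ^ 2 * poly (hpoly a b m) x
        = a * (x - b) * ((x - b) ^ m * poly (gpoly a b m) a)"
      by (simp add: algebra_simps)
    then show ?thesis
      using Suc by (simp add: H_def fps_compose_linear mult.assoc)
  qed
qed

lemma gpoly_at_alpha_kernel_substitution:
  fixes a b :: complex
  assumes "a \<noteq> b"
  defines "V \<equiv> fps_const a * inverse (1 + fps_const ((a - b)\<^sup>2) * fps_X)"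
  shows "fps_const a * (V - fps_const b)
           * (Abs_fps (\<lambda>n. poly (gpoly a b n) a) oo fps_X * (V - fps_const b))
         = fps_const (a - b) * V"
proof -
  define d where "d = a - b"
  define c where "c = (\<lambda>n. poly (gpoly a b n) a)"
  define \<sigma> where "\<sigma> = fps_X * (V - fps_const b)"
  have "V * (1 + fps_const (d\<^sup>2) * fps_X) = fps_const a"
    by (simp add: V_def d_def mult.assoc inverse_mult_eq_1)
  then have V_shift: "V - fps_const a = - (fps_const (d\<^sup>2) * fps_X * V)"
    by (simp add: algebra_simps)
  have eval_linear: "fps_eval_poly [:- e, 1:] V = V - fps_const e" for e
    by (simp add: fps_eval_poly_linear fps_const_neg)
  define h where "h n = fps_X ^ n * (fps_const (d\<^sup>2) * V * fps_eval_poly (hpoly a b n) V)" for n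
  have "h n - h (Suc n) = fps_const a * (V - fps_const b) * (fps_const (c n) * \<sigma> ^ n)" for n
  proof -
    have "fps_eval_poly [:- a, 1:] V * fps_eval_poly (hpoly a b (Suc n)) V
        + fps_const (d\<^sup>2) * (fps_eval_poly [:- 0, 1:] V * fps_eval_poly (hpoly a b n) V)
        = fps_const (a * c n) * fps_eval_poly [:- b, 1:] V ^ Suc n"
      using arg_cong[OF hpoly_recurrence[OF assms(1)], of "\<lambda>p. fps_eval_poly p V"]
      by (simp only: fps_eval_poly_add fps_eval_poly_mult fps_eval_poly_smult fps_eval_poly_power
          c_def d_def minus_zero)
    then have step: "fps_const (d\<^sup>2) * V * (fps_eval_poly (hpoly a b n) V
        - fps_X * fps_eval_poly (hpoly a b (Suc n)) V) = fps_const (a * c n) * (V - fps_const b) ^ Suc n"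
      unfolding eval_linear V_shift by (simp add: algebra_simps)
    have "h n - h (Suc n) = fps_X ^ n * (fps_const (d\<^sup>2) * V * (fps_eval_poly (hpoly a b n) V
        - fps_X * fps_eval_poly (hpoly a b (Suc n)) V))"
      by (simp add: h_def algebra_simps)
    also have "\<dots> = fps_X ^ n * (fps_const (a * c n) * (V - fps_const b) ^ Suc n)"
      by (simp only: step)
    finally show ?thesis
      by (simp add: \<sigma>_def power_mult_distrib mult_ac flip: fps_const_mult)
  qed
  moreover have "h n $ k = 0" if "k < n" for n k
    using that by (simp add: h_def fps_X_power_mult_nth)
  ultimately have "h 0 = fps_const a * (V - fps_const b) * (Abs_fps c oo \<sigma>)"
    by (intro fps_compose_eq_of_telescoping) (simp_all add: \<sigma>_def)
  moreover have "h 0 = fps_const d * V"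
    using assms(1) by (simp add: h_def hpoly_0 fps_eval_poly_const d_def power2_eq_square)
  ultimately show ?thesis
    by (simp add: c_def d_def \<sigma>_def)
qed

lemma gpoly_at_alpha_fps_quadratic:
  fixes a b :: complex
  assumes "a \<noteq> b"
  defines "Y \<equiv> fps_const (2 * a) * fps_X * Abs_fps (\<lambda>n. poly (gpoly a b n) a)"
  shows "Y\<^sup>2 - fps_const 2 * Y * (1 + fps_const (a - b) * fps_X) + fps_const (4 * a) * fps_X = 0"
proof -
  define d where "d = a - b"
  define V where "V = fps_const a * inverse (1 + fps_const (d\<^sup>2) * fps_X)"
  define \<sigma> where "\<sigma> = fps_X * (V - fps_const b)"
  have \<sigma>_0: "\<sigma> $ 0 = 0"
    by (simp add: \<sigma>_def)
  have "Y oo \<sigma> = fps_const 2 * fps_X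
      * (fps_const a * (V - fps_const b) * (Abs_fps (\<lambda>n. poly (gpoly a b n) a) oo \<sigma>))"
    by (simp add: Y_def \<sigma>_def fps_compose_mult_distrib mult_ac flip: fps_const_mult)
  then have Y_\<sigma>: "Y oo \<sigma> = fps_const 2 * fps_X * fps_const d * V"
    using gpoly_at_alpha_kernel_substitution[OF assms(1)]
    by (simp add: V_def \<sigma>_def d_def mult.assoc)
  have "(Y\<^sup>2 - fps_const 2 * Y * (1 + fps_const (a - b) * fps_X) + fps_const (4 * a) * fps_X) oo \<sigma>
      = (Y oo \<sigma>)\<^sup>2 - fps_const 2 * (Y oo \<sigma>) * (1 + fps_const (a - b) * \<sigma>) + fps_const (4 * a) * \<sigma>"
    by (simp add: fps_compose_sub_distrib fps_compose_add_distrib fps_compose_mult_distrib[OF \<sigma>_0]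
        fps_compose_power[OF \<sigma>_0] \<sigma>_0)
  also have "\<dots> = fps_const 4 * fps_X * fps_const b * (V * (1 + fps_const (d\<^sup>2) * fps_X) - fps_const a)"
    unfolding Y_\<sigma> unfolding \<sigma>_def d_def
    by (simp only: fps_const_sub[symmetric] fps_const_mult[symmetric] fps_const_power[symmetric]
        fps_numeral_fps_const[symmetric]) algebra
  also have "\<dots> = 0"
    by (simp add: V_def mult.assoc inverse_mult_eq_1)
  finally have "(Y\<^sup>2 - fps_const 2 * Y * (1 + fps_const (a - b) * fps_X) + fps_const (4 * a) * fps_X) oo \<sigma> = 0" .
  moreover have "\<sigma> $ 1 \<noteq> 0"
    using assms(1) by (simp add: \<sigma>_def V_def d_def)
  ultimately show ?thesis
    using fps_compose_eq_0_iff[OF \<sigma>_0] by force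
qed

lemma gpoly_at_alpha_fps_quadratic_compose:
  fixes a b :: complex and s :: "complex fps"
  assumes "a \<noteq> b" and s_0: "s $ 0 = 0"
  defines "W \<equiv> fps_const (2 * a) * s * (Abs_fps (\<lambda>n. poly (gpoly a b n) a) oo s)"
  shows "W\<^sup>2 - fps_const 2 * W * (1 + fps_const (a - b) * s) + fps_const (4 * a) * s = 0"
proof -
  let ?Y = "fps_const (2 * a) * fps_X * Abs_fps (\<lambda>n. poly (gpoly a b n) a)"
  have W: "W = ?Y oo s"
    by (simp add: W_def fps_compose_mult_distrib[OF s_0] s_0)
  have "W\<^sup>2 - fps_const 2 * W * (1 + fps_const (a - b) * s) + fps_const (4 * a) * s
      = (?Y\<^sup>2 - fps_const 2 * ?Y * (1 + fps_const (a - b) * fps_X) + fps_const (4 * a) * fps_X) oo s"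
    unfolding W by (simp add: fps_compose_sub_distrib fps_compose_add_distrib fps_compose_mult_distrib[OF s_0]
        fps_compose_power[OF s_0, symmetric] s_0)
  then show ?thesis
    using gpoly_at_alpha_fps_quadratic[OF assms(1)] by simp
qed

lemma fps_sqrt1_gpoly_discriminant:
  fixes a b x :: complex
  assumes "a \<noteq> b"
  defines "\<tau> \<equiv> fps_const (x - b) * fps_X"
  shows "fps_sqrt1 (1 - fps_X * fps_const (2 * (x - b) * (a + b))
                      + fps_X ^ 2 * fps_const ((x - b) ^ 2 * (a - b) ^ 2))
    = 1 + fps_X * fps_const ((x - b) * (a - b))
        - fps_const (2 * a) * \<tau> * (Abs_fps (\<lambda>n. poly (gpoly a b n) a) oo \<tau>)"
    (is "fps_sqrt1 ?P = 1 + _ - ?W")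
proof (rule fps_sqrt1_eqI)
  have "?W\<^sup>2 - fps_const 2 * ?W * (1 + fps_const (a - b) * \<tau>) + fps_const (4 * a) * \<tau> = 0"
    by (rule gpoly_at_alpha_fps_quadratic_compose[OF assms(1)]) (simp add: \<tau>_def)
  then show "(1 + fps_X * fps_const ((x - b) * (a - b)) - ?W)\<^sup>2 = ?P"
    unfolding \<tau>_def
    by (simp only: fps_const_sub[symmetric] fps_const_add[symmetric] fps_const_mult[symmetric]
        fps_const_power[symmetric] fps_numeral_fps_const[symmetric]) algebra
  show "(1 + fps_X * fps_const ((x - b) * (a - b)) - ?W) $ 0 = 1"
    by (simp add: \<tau>_def)
qed

theorem mainTheorem3:
  fixes \<alpha> \<beta> x :: complex
  assumes "\<alpha> \<noteq> \<beta>" and "x \<noteq> \<alpha>"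
  shows "Abs_fps (\<lambda>n. (\<alpha> - \<beta>) powi (int n - 1) * poly (gpoly \<alpha> \<beta> n) x) =
    (1 + fps_X * fps_const ((x - \<beta>) * (\<alpha> - \<beta>))
       - fps_sqrt1 (1 - fps_X * fps_const (2 * (x - \<beta>) * (\<alpha> + \<beta>))
                      + fps_X ^ 2 * fps_const ((x - \<beta>) ^ 2 * (\<alpha> - \<beta>) ^ 2))
       + fps_const (2 * (x - \<alpha>) / (\<alpha> - \<beta>)))
    / (fps_const 2 * (fps_const (x - \<alpha>) + fps_const x * fps_X * fps_const ((\<alpha> - \<beta>) ^ 2)))"
proof -
  define G where "G = Abs_fps (\<lambda>n. poly (hpoly \<alpha> \<beta> n) x)"
  define D where "D = fps_const 2 * (fps_const (x - \<alpha>) + fps_const x * fps_X * fps_const ((\<alpha> - \<beta>) ^ 2))"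
  have "G * D = 1 + fps_X * fps_const ((x - \<beta>) * (\<alpha> - \<beta>))
       - fps_sqrt1 (1 - fps_X * fps_const (2 * (x - \<beta>) * (\<alpha> + \<beta>))
                      + fps_X ^ 2 * fps_const ((x - \<beta>) ^ 2 * (\<alpha> - \<beta>) ^ 2))
       + fps_const (2 * (x - \<alpha>) / (\<alpha> - \<beta>))" (is "_ = ?N")
    using hpoly_fps_functional_equation[OF assms(1), of x, folded G_def]
    unfolding fps_sqrt1_gpoly_discriminant[OF assms(1)] D_def
    by (simp only: fps_const_sub[symmetric] fps_const_add[symmetric] fps_const_mult[symmetric]
        fps_const_power[symmetric] fps_numeral_fps_const[symmetric] times_divide_eq_right[symmetric]) algebra
  moreover have "D \<noteq> 0"
    using assms(2) by (auto simp: D_def fps_eq_iff)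
  ultimately have "G = ?N / D"
    by (metis nonzero_mult_div_cancel_right)
  then show ?thesis
    by (simp add: G_def hpoly_def D_def)
qed

end
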